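(* Let $(X,d)$ be a hemi-metric space and $(E,\delta)$ a metric space. Let $T=(T_{ab})_{(a,b)\in E\times E}$ and $T'=(T'_{ab})_{(a,b)\in E\times E}$ be two families of self-maps of $X$ that are nonexpansive with respect to $d$. Suppose there exist $\epsilon\ge 0$ and $L>0$ such that for all $(a,b),(a',b')\in E\times E$ and all $x\in X$, \[ d^{\circ}(T_{ab}(x),T'_{a'b'}(x))\le L(\delta(a,a')+\delta(b,b'))+\epsilon. \] Then for all nonempty compact subsets $\mathcal{A},\mathcal{A}',\mathcal{B},\mathcal{B}'\subset E$, \[ |\rho(T,\mathcal{A},\mathcal{B})-\rho(T',\mathcal{A}',\mathcal{B}')|\le L\big(\delta_H(\mathcal{A},\mathcal{A}')+\delta_H(\mathcal{B},\mathcal{B}')\big)+\epsilon. \]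
   Context: A hemi-metric on a set $X$ is a map $d:X\times X\to\mathbb{R}$ satisfying $d(x,z)\le d(x,y)+d(y,z)$ for all $x,y,z$, and $d(x,y)=d(y,x)=0$ iff $x=y$ (it may take negative values). Its symmetrization $d^{\circ}(x,y)=\max(d(x,y),d(y,x))$ is a metric, and $X$ carries the topology of $d^{\circ}$. A map $T:X\to X$ is nonexpansive if $d(T(x),T(y))\le d(x,y)$ for all $x,y$. $\delta_H$ denotes the Hausdorff distance between compact subsets of $E$ induced by $\delta$. Escape rate game and its value: given nonempty compact action sets $\mathcal{A},\mathcal{B}$, a family of nonexpansive self-maps $T_{ab}$ of $X$, $(a,b)\in\mathcal{A}\times\mathcal{B}$, and an initial state $x_0\in X$, two players play infinitely many turns with perfect information: at turn $k\ge1$, player Min chooses $a_k\in\mathcal{A}$, then, having observed $a_k$, player Max chooses $b_k\in\mathcal{B}$, and the state becomes $x_k=T_{a_kb_k}(x_{k-1})$. A strategy of a player is a map assigning an action to each finite history of states and actions. For strategies $\sigma$ of Min and $\tau$ of Max, the payoff is the escape rate $J(\sigma,\tau)=\limsup_{k\to\infty}\frac1k d(x_k,x_0)$ (independent of $x_0$), which Min minimizes and Max maximizes. The game has value $\lambda\in\mathbb{R}$ if for every $\epsilon'>0$ there are strategies $\sigma^*,\tau^*$ with $J(\sigma^*,\tau)\le\lambda+\epsilon'$ and $J(\sigma,\tau^* )\ge\lambda-\epsilon'$ for all strategies $\sigma,\tau$. The value (competitive spectral radius) is denoted $\rho(T,\mathcal{A},\mathcal{B})$. Standing assumption (under which the value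 exists): for every $x\in X$ the maps $a\mapsto T_{ab}(x)$ and $b\mapsto T_{ab}(x)$ are continuous, and for every compact $K\subset X$ the set $\{T_{ab}(x):(a,b,x)\in\mathcal{A}\times\mathcal{B}\times K\}$ is compact; this is assumed for both families $T,T'$ and all the action sets considered. *)

theory Defs
  imports "HOL-Analysis.Analysis"
begin

definition hemi_metric :: "('x \<Rightarrow> 'x \<Rightarrow> real) \<Rightarrow> bool" where
  "hemi_metric d \<longleftrightarrow>
     (\<forall>x y z. d x z \<le> d x y + d y z) \<and>
     (\<forall>x y. (d x y = 0 \<and> d y x = 0) \<longleftrightarrow> x = y)"

definition dsym :: "('x \<Rightarrow> 'x \<Rightarrow> real) \<Rightarrow> 'x \<Rightarrow> 'x \<Rightarrow> real" where
  "dsym d x y = max (d x y) (d y x)"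

definition hemi_topology :: "('x \<Rightarrow> 'x \<Rightarrow> real) \<Rightarrow> 'x topology" where
  "hemi_topology d = Metric_space.mtopology UNIV (dsym d)"

definition nonexpansive_family :: "('x \<Rightarrow> 'x \<Rightarrow> real) \<Rightarrow> ('e \<Rightarrow> 'e \<Rightarrow> 'x \<Rightarrow> 'x) \<Rightarrow> bool" where
  "nonexpansive_family d T \<longleftrightarrow> (\<forall>a b x y. d (T a b x) (T a b y) \<le> d x y)"

definition hausdorff_dist :: "'e::metric_space set \<Rightarrow> 'e set \<Rightarrow> real" where
  "hausdorff_dist A B = max (SUP a\<in>A. infdist a B) (SUP b\<in>B. infdist b A)"

text \<open>A history at the beginning of turn k+1 consists of the states x_0,...,x_k,
  Min's actions a_1,...,a_k and Max's actions b_1,...,b_k.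
  A strategy of Min maps such a history to an action; a strategy of Max maps
  such a history together with Min's current action (appended to the list of
  Min's actions) to an action.\<close>

type_synonym ('x,'e) strategy = "'x list \<Rightarrow> 'e list \<Rightarrow> 'e list \<Rightarrow> 'e"

definition strategies :: "'e set \<Rightarrow> ('x,'e) strategy set" where
  "strategies A = {s. \<forall>xs as bs. s xs as bs \<in> A}"

fun play :: "('e \<Rightarrow> 'e \<Rightarrow> 'x \<Rightarrow> 'x) \<Rightarrow> ('x,'e) strategy \<Rightarrow> ('x,'e) strategy \<Rightarrow> 'x \<Rightarrow> nat
              \<Rightarrow> 'x list \<times> 'e list \<times> 'e list" where
  "play T \<sigma> \<tau> x0 0 = ([x0], [], [])"
| "play T \<sigma> \<tau> x0 (Suc k) =
     (let (xs, as, bs) = play T \<sigma> \<tau> x0 k;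
          a = \<sigma> xs as bs;
          b = \<tau> xs (as @ [a]) bs
      in (xs @ [T a b (last xs)], as @ [a], bs @ [b]))"

definition state :: "('e \<Rightarrow> 'e \<Rightarrow> 'x \<Rightarrow> 'x) \<Rightarrow> ('x,'e) strategy \<Rightarrow> ('x,'e) strategy \<Rightarrow> 'x \<Rightarrow> nat \<Rightarrow> 'x" where
  "state T \<sigma> \<tau> x0 k = last (fst (play T \<sigma> \<tau> x0 k))"

definition escape_rate :: "('x \<Rightarrow> 'x \<Rightarrow> real) \<Rightarrow> ('e \<Rightarrow> 'e \<Rightarrow> 'x \<Rightarrow> 'x) \<Rightarrow> ('x,'e) strategy \<Rightarrow> ('x,'e) strategy \<Rightarrow> 'x \<Rightarrow> ereal" where
  "escape_rate d T \<sigma> \<tau> x0 = limsup (\<lambda>k. ereal (d (state T \<sigma> \<tau> x0 k) x0 / real k))"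

definition game_has_value :: "('x \<Rightarrow> 'x \<Rightarrow> real) \<Rightarrow> ('e \<Rightarrow> 'e \<Rightarrow> 'x \<Rightarrow> 'x) \<Rightarrow> 'e set \<Rightarrow> 'e set \<Rightarrow> 'x \<Rightarrow> real \<Rightarrow> bool" where
  "game_has_value d T A B x0 r \<longleftrightarrow>
     (\<forall>\<epsilon>>0. \<exists>\<sigma>s\<in>strategies A. \<exists>\<tau>s\<in>strategies B.
        (\<forall>\<tau>\<in>strategies B. escape_rate d T \<sigma>s \<tau> x0 \<le> ereal (r + \<epsilon>)) \<and>
        (\<forall>\<sigma>\<in>strategies A. escape_rate d T \<sigma> \<tau>s x0 \<ge> ereal (r - \<epsilon>)))"

text \<open>Standing assumption (under which the value exists).\<close>
definition standing_assumption :: "('x \<Rightarrow> 'x \<Rightarrow> real) \<Rightarrow> ('e::metric_space \<Rightarrow> 'e \<Rightarrow> 'x \<Rightarrow> 'x) \<Rightarrow> 'e set \<Rightarrow> 'e set \<Rightarrow> bool" where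
  "standing_assumption d T A B \<longleftrightarrow>
     (\<forall>x. \<forall>b\<in>B. continuous_map (top_of_set A) (hemi_topology d) (\<lambda>a. T a b x)) \<and>
     (\<forall>x. \<forall>a\<in>A. continuous_map (top_of_set B) (hemi_topology d) (\<lambda>b. T a b x)) \<and>
     (\<forall>K. compactin (hemi_topology d) K \<longrightarrow>
          compactin (hemi_topology d) {T a b x | a b x. a \<in> A \<and> b \<in> B \<and> x \<in> K})"

end

theory Submission
  imports Defs
begin

text \<open>Fix an almost optimal strategy \<open>\<sigma>\<close> of Min in the game of \<open>T\<close> and an almost optimal
  strategy \<open>\<tau>'\<close> of Max in the game of \<open>T'\<close>. Copying every move into the other game through
  nearest-point maps \<open>A \<rightarrow> A'\<close> and \<open>B' \<rightarrow> B\<close> lets the two games be played in lockstep, and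
  turns \<open>\<sigma>\<close> and \<open>\<tau>'\<close> into a strategy \<open>\<sigma>'\<close> of Min in the second game and \<open>\<tau>\<close> of Max in the
  first. By nonexpansiveness and the perturbation hypothesis the two states drift apart by at
  most \<open>M = L (\<delta>\<^sub>H(A,A') + \<delta>\<^sub>H(B,B')) + \<epsilon>\<close> per turn, so the escape rates differ by at most \<open>M\<close>,
  whence \<open>r' \<le> r + M\<close>; the reverse inequality is symmetric.\<close>

lemma hemi_metric_triangle: "hemi_metric d \<Longrightarrow> d x z \<le> d x y + d y z"
  unfolding hemi_metric_def by blast

lemma infdist_attained_compact:
  fixes S :: "'e::metric_space set"
  assumes "compact S" "S \<noteq> {}"
  obtains s where "s \<in> S" "dist a s = infdist a S"
proof -
  have "continuous_on S (dist a)"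
    by (intro continuous_intros)
  then obtain s where s: "s \<in> S" "\<And>y. y \<in> S \<Longrightarrow> dist a s \<le> dist a y"
    using continuous_attains_inf[OF assms] by blast
  have "dist a s \<le> infdist a S"
    using s assms(2) by (simp add: infdist_notempty cINF_greatest)
  with infdist_le[OF s(1), of a] have "dist a s = infdist a S"
    by linarith
  with s(1) show ?thesis by (rule that)
qed

lemma infdist_le_hausdorff_dist:
  fixes A :: "'e::metric_space set"
  assumes "compact A" "a \<in> A"
  shows "infdist a B \<le> hausdorff_dist A B"
proof -
  have "compact ((\<lambda>a. infdist a B) ` A)"
    by (rule compact_continuous_image[OF _ assms(1)]) (intro continuous_intros)
  then have "bdd_above ((\<lambda>a. infdist a B) ` A)"
    by (simp add: bounded_imp_bdd_above compact_imp_bounded)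
  then have "infdist a B \<le> (SUP a\<in>A. infdist a B)"
    by (rule cSUP_upper[OF assms(2)])
  then show ?thesis
    unfolding hausdorff_dist_def by linarith
qed

lemma hausdorff_dist_commute: "hausdorff_dist A B = hausdorff_dist B A"
  unfolding hausdorff_dist_def by (simp add: max.commute)

lemma infdist_le_hausdorff_dist':
  fixes A :: "'e::metric_space set"
  assumes "compact B" "b \<in> B"
  shows "infdist b A \<le> hausdorff_dist A B"
  using infdist_le_hausdorff_dist[OF assms] by (simp add: hausdorff_dist_commute)

fun coupled_play ::
  "('e \<Rightarrow> 'e \<Rightarrow> 'x \<Rightarrow> 'x) \<Rightarrow> ('e \<Rightarrow> 'e \<Rightarrow> 'x \<Rightarrow> 'x) \<Rightarrow> ('x,'e) strategy \<Rightarrow> ('x,'e) strategy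
   \<Rightarrow> ('e \<Rightarrow> 'e) \<Rightarrow> ('e \<Rightarrow> 'e) \<Rightarrow> 'x \<Rightarrow> 'x \<Rightarrow> nat
   \<Rightarrow> ('x list \<times> 'e list \<times> 'e list) \<times> ('x list \<times> 'e list \<times> 'e list)" where
  "coupled_play T T' \<sigma> \<tau>' pa pb x0 x0' 0 = (([x0], [], []), ([x0'], [], []))"
| "coupled_play T T' \<sigma> \<tau>' pa pb x0 x0' (Suc k) =
    (let ((xs, as, bs), (ys, as', bs')) = coupled_play T T' \<sigma> \<tau>' pa pb x0 x0' k;
         a = \<sigma> xs as bs; b' = \<tau>' ys (as' @ [pa a]) bs'
     in ((xs @ [T a (pb b') (last xs)], as @ [a], bs @ [pb b']),
         (ys @ [T' (pa a) b' (last ys)], as' @ [pa a], bs' @ [b'])))"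

lemma coupled_play_SucI:
  assumes "coupled_play T T' \<sigma> \<tau>' pa pb x0 x0' k = ((xs, as, bs), (ys, as', bs'))"
    and "a = \<sigma> xs as bs" and "b' = \<tau>' ys (as' @ [pa a]) bs'"
  shows "coupled_play T T' \<sigma> \<tau>' pa pb x0 x0' (Suc k) =
    ((xs @ [T a (pb b') (last xs)], as @ [a], bs @ [pb b']),
     (ys @ [T' (pa a) b' (last ys)], as' @ [pa a], bs' @ [b']))"
  using assms by (simp add: Let_def)

lemma length_coupled_play:
  assumes "coupled_play T T' \<sigma> \<tau>' pa pb x0 x0' k = ((xs, as, bs), (ys, as', bs'))"
  shows "length bs = k \<and> length as' = k"
  using assms
proof (induction k arbitrary: xs as bs ys as' bs')
  case (Suc k)
  obtain xs0 as0 bs0 ys0 as0' bs0' where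
    "coupled_play T T' \<sigma> \<tau>' pa pb x0 x0' k = ((xs0, as0, bs0), (ys0, as0', bs0'))"
    by (metis prod.exhaust)
  with Suc show ?case
    by (auto simp: Let_def)
qed simp

lemma play_coupled_play_fst:
  "play T \<sigma> (\<lambda>xs as bs. last (snd (snd (fst (coupled_play T T' \<sigma> \<tau>' pa pb x0 x0' (Suc (length bs))))))) x0 k
   = fst (coupled_play T T' \<sigma> \<tau>' pa pb x0 x0' k)"
proof (induction k)
  case (Suc k)
  obtain xs as bs ys as' bs' where
    e: "coupled_play T T' \<sigma> \<tau>' pa pb x0 x0' k = ((xs, as, bs), (ys, as', bs'))"
    by (metis prod.exhaust)
  show ?case
    using Suc.IH e length_coupled_play[OF e] by (simp add: Let_def)
qed simp

lemma play_coupled_play_snd: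
  "play T' (\<lambda>xs as bs. last (fst (snd (snd (coupled_play T T' \<sigma> \<tau>' pa pb x0 x0' (Suc (length as))))))) \<tau>' x0' k
   = snd (coupled_play T T' \<sigma> \<tau>' pa pb x0 x0' k)"
proof (induction k)
  case (Suc k)
  obtain xs as bs ys as' bs' where
    e: "coupled_play T T' \<sigma> \<tau>' pa pb x0 x0' k = ((xs, as, bs), (ys, as', bs'))"
    by (metis prod.exhaust)
  show ?case
    using Suc.IH e length_coupled_play[OF e] by (simp add: Let_def)
qed simp

lemma dist_last_coupled_play:
  assumes hm: "hemi_metric d" and ne: "nonexpansive_family d T'"
    and \<sigma>: "\<sigma> \<in> strategies A" and \<tau>': "\<tau>' \<in> strategies B'"
    and close: "\<And>a b' x. a \<in> A \<Longrightarrow> b' \<in> B' \<Longrightarrow> d (T' (pa a) b' x) (T a (pb b') x) \<le> M"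
  shows "coupled_play T T' \<sigma> \<tau>' pa pb x0 x0' k = ((xs, as, bs), (ys, as', bs'))
    \<Longrightarrow> d (last ys) (last xs) \<le> d x0' x0 + real k * M"
proof (induction k arbitrary: xs as bs ys as' bs')
  case (Suc k)
  obtain xs0 as0 bs0 ys0 as0' bs0' where
    e: "coupled_play T T' \<sigma> \<tau>' pa pb x0 x0' k = ((xs0, as0, bs0), (ys0, as0', bs0'))"
    by (metis prod.exhaust)
  define a where "a = \<sigma> xs0 as0 bs0"
  define b' where "b' = \<tau>' ys0 (as0' @ [pa a]) bs0'"
  have last_eqs: "last xs = T a (pb b') (last xs0)" "last ys = T' (pa a) b' (last ys0)"
    using Suc.prems coupled_play_SucI[OF e a_def b'_def] by auto
  have "a \<in> A" "b' \<in> B'"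
    using \<sigma> \<tau>' unfolding a_def b'_def strategies_def by blast+
  have "d (T' (pa a) b' (last ys0)) (T a (pb b') (last xs0))
      \<le> d (T' (pa a) b' (last ys0)) (T' (pa a) b' (last xs0)) + d (T' (pa a) b' (last xs0)) (T a (pb b') (last xs0))"
    by (rule hemi_metric_triangle[OF hm])
  also have "\<dots> \<le> d (last ys0) (last xs0) + M"
    using ne close[OF \<open>a \<in> A\<close> \<open>b' \<in> B'\<close>] unfolding nonexpansive_family_def by (meson add_mono)
  also have "\<dots> \<le> d x0' x0 + real (Suc k) * M"
    using Suc.IH[OF e] by (simp add: algebra_simps)
  finally show ?case
    unfolding last_eqs .
qed simp

lemma coupled_strategies:
  fixes T T' :: "'e \<Rightarrow> 'e \<Rightarrow> 'x \<Rightarrow> 'x" and \<sigma> \<tau>' :: "('x,'e) strategy"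
  assumes hm: "hemi_metric d" and ne: "nonexpansive_family d T'"
    and \<sigma>: "\<sigma> \<in> strategies A" and \<tau>': "\<tau>' \<in> strategies B'"
    and pa: "\<And>a. a \<in> A \<Longrightarrow> pa a \<in> A'" and pb: "\<And>b'. b' \<in> B' \<Longrightarrow> pb b' \<in> B"
    and close: "\<And>a b' x. a \<in> A \<Longrightarrow> b' \<in> B' \<Longrightarrow> d (T' (pa a) b' x) (T a (pb b') x) \<le> M"
  obtains \<tau> \<sigma>' where "\<tau> \<in> strategies B" "\<sigma>' \<in> strategies A'"
    "\<And>k. d (state T' \<sigma>' \<tau>' x0' k) (state T \<sigma> \<tau> x0 k) \<le> d x0' x0 + real k * M"
proof -
  let ?C = "coupled_play T T' \<sigma> \<tau>' pa pb x0 x0'"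
  \<comment> \<open>Only the turn number is read off the history: against \<open>\<sigma>\<close> (resp. \<open>\<tau>'\<close>) the history
    is that of the coupled play anyway.\<close>
  define \<tau> :: "('x,'e) strategy" where "\<tau> = (\<lambda>xs as bs. last (snd (snd (fst (?C (Suc (length bs)))))))"
  define \<sigma>' :: "('x,'e) strategy" where "\<sigma>' = (\<lambda>xs as bs. last (fst (snd (snd (?C (Suc (length as)))))))"
  have "last (snd (snd (fst (?C (Suc n))))) \<in> B \<and> last (fst (snd (snd (?C (Suc n))))) \<in> A'" for n
  proof -
    obtain xs as bs ys as' bs' where e: "?C n = ((xs, as, bs), (ys, as', bs'))"
      by (metis prod.exhaust)
    have "\<sigma> xs as bs \<in> A" "\<tau>' ys (as' @ [pa (\<sigma> xs as bs)]) bs' \<in> B'"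
      using \<sigma> \<tau>' unfolding strategies_def by blast+
    then show ?thesis
      using coupled_play_SucI[OF e refl refl] pa pb by simp
  qed
  then have "\<tau> \<in> strategies B" "\<sigma>' \<in> strategies A'"
    unfolding strategies_def \<tau>_def \<sigma>'_def by blast+
  moreover have "d (state T' \<sigma>' \<tau>' x0' k) (state T \<sigma> \<tau> x0 k) \<le> d x0' x0 + real k * M" for k
  proof -
    obtain xs as bs ys as' bs' where e: "?C k = ((xs, as, bs), (ys, as', bs'))"
      by (metis prod.exhaust)
    then have "state T \<sigma> \<tau> x0 k = last xs" "state T' \<sigma>' \<tau>' x0' k = last ys"
      unfolding state_def \<tau>_def \<sigma>'_def play_coupled_play_fst play_coupled_play_snd by simp_all
    then show ?thesis
      using dist_last_coupled_play[OF hm ne \<sigma> \<tau>' close e] by simp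
  qed
  ultimately show ?thesis
    using that by blast
qed

lemma limsup_escape_le_add:
  assumes hm: "hemi_metric d" and close: "\<And>k. d (y k) (x k) \<le> c + real k * M"
  shows "limsup (\<lambda>k. ereal (d (y k) y0 / real k)) \<le> ereal M + limsup (\<lambda>k. ereal (d (x k) x0 / real k))"
proof -
  define c' where "c' = c + d x0 y0"
  have bound: "d (y k) y0 \<le> d (x k) x0 + c' + real k * M" for k
    using hemi_metric_triangle[OF hm, of "y k" y0 "x k"] hemi_metric_triangle[OF hm, of "x k" y0 x0]
      close[of k] unfolding c'_def by linarith
  have "eventually (\<lambda>k. ereal (d (y k) y0 / real k) \<le> ereal (c' / real k + M) + ereal (d (x k) x0 / real k))
      sequentially"
    unfolding eventually_sequentially
  proof (intro exI allI impI)
    fix k :: nat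
    assume "k \<ge> 1"
    then have "real k > 0"
      by simp
    then have "d (y k) y0 / real k \<le> (d (x k) x0 + c' + real k * M) / real k"
      using bound[of k] by (simp add: divide_right_mono)
    also have "\<dots> = c' / real k + M + d (x k) x0 / real k"
      using \<open>real k > 0\<close> by (simp add: field_simps)
    finally show "ereal (d (y k) y0 / real k) \<le> ereal (c' / real k + M) + ereal (d (x k) x0 / real k)"
      by simp
  qed
  then have "limsup (\<lambda>k. ereal (d (y k) y0 / real k))
      \<le> limsup (\<lambda>k. ereal (c' / real k + M) + ereal (d (x k) x0 / real k))"
    by (rule Limsup_mono)
  also have "\<dots> = ereal M + limsup (\<lambda>k. ereal (d (x k) x0 / real k))"
  proof (rule ereal_limsup_lim_add)
    have "(\<lambda>k. c' / real k + M) \<longlonglongrightarrow> 0 + M"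
      by (intro tendsto_add lim_const_over_n tendsto_const)
    then show "(\<lambda>k. ereal (c' / real k + M)) \<longlonglongrightarrow> ereal M"
      by (simp add: tendsto_ereal)
  qed simp
  finally show ?thesis .
qed

lemma perturb_le_hausdorff_dist:
  fixes A :: "'e::metric_space set"
  assumes "L \<ge> 0"
    and perturb: "\<And>a b a' b' x. dsym d (T a b x) (T' a' b' x) \<le> L * (dist a a' + dist b b') + \<epsilon>"
    and "compact A" "a \<in> A" "dist a a' = infdist a A'"
    and "compact B'" "b' \<in> B'" "dist b' b = infdist b' B"
  shows "d (T' a' b' x) (T a b x) \<le> L * (hausdorff_dist A A' + hausdorff_dist B B') + \<epsilon>"
proof -
  have "d (T' a' b' x) (T a b x) \<le> dsym d (T a b x) (T' a' b' x)"
    unfolding dsym_def by simp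
  also have "\<dots> \<le> L * (dist a a' + dist b b') + \<epsilon>"
    by (rule perturb)
  also have "\<dots> \<le> L * (hausdorff_dist A A' + hausdorff_dist B B') + \<epsilon>"
    using infdist_le_hausdorff_dist[OF assms(3,4), of A'] infdist_le_hausdorff_dist'[OF assms(6,7), of B]
      assms(1,5,8) by (simp add: dist_commute add_mono mult_left_mono)
  finally show ?thesis .
qed

lemma game_value_le:
  fixes d :: "'x \<Rightarrow> 'x \<Rightarrow> real" and T T' :: "'e::metric_space \<Rightarrow> 'e \<Rightarrow> 'x \<Rightarrow> 'x"
  assumes hm: "hemi_metric d" and ne: "nonexpansive_family d T'" and "L \<ge> 0"
    and perturb: "\<And>a b a' b' x. dsym d (T a b x) (T' a' b' x) \<le> L * (dist a a' + dist b b') + \<epsilon>"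
    and "compact A" "compact A'" "A' \<noteq> {}" "compact B" "B \<noteq> {}" "compact B'"
    and has_value: "game_has_value d T A B x0 r" and has_value': "game_has_value d T' A' B' x0' r'"
  shows "r' \<le> r + (L * (hausdorff_dist A A' + hausdorff_dist B B') + \<epsilon>)"
proof (rule field_le_epsilon)
  fix e :: real
  assume "e > 0"
  define M where "M = L * (hausdorff_dist A A' + hausdorff_dist B B') + \<epsilon>"
  obtain \<sigma> where \<sigma>: "\<sigma> \<in> strategies A"
    and \<sigma>_bound: "\<And>\<tau>. \<tau> \<in> strategies B \<Longrightarrow> escape_rate d T \<sigma> \<tau> x0 \<le> ereal (r + e / 2)"
    using has_value \<open>e > 0\<close> unfolding game_has_value_def by (meson half_gt_zero)
  obtain \<tau>' where \<tau>': "\<tau>' \<in> strategies B'"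
    and \<tau>'_bound: "\<And>\<sigma>. \<sigma> \<in> strategies A' \<Longrightarrow> escape_rate d T' \<sigma> \<tau>' x0' \<ge> ereal (r' - e / 2)"
    using has_value' \<open>e > 0\<close> unfolding game_has_value_def by (meson half_gt_zero)
  have "\<forall>a. \<exists>a'. a' \<in> A' \<and> dist a a' = infdist a A'"
    by (meson infdist_attained_compact[OF \<open>compact A'\<close> \<open>A' \<noteq> {}\<close>])
  then obtain pa where pa: "\<And>a. pa a \<in> A' \<and> dist a (pa a) = infdist a A'"
    by metis
  have "\<forall>b'. \<exists>b. b \<in> B \<and> dist b' b = infdist b' B"
    by (meson infdist_attained_compact[OF \<open>compact B\<close> \<open>B \<noteq> {}\<close>])
  then obtain pb where pb: "\<And>b'. pb b' \<in> B \<and> dist b' (pb b') = infdist b' B"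
    by metis
  have close: "d (T' (pa a) b' x) (T a (pb b') x) \<le> M" if "a \<in> A" "b' \<in> B'" for a b' x
  proof -
    have "dist a (pa a) = infdist a A'" "dist b' (pb b') = infdist b' B"
      using pa pb by blast+
    from perturb_le_hausdorff_dist[OF \<open>L \<ge> 0\<close> perturb \<open>compact A\<close> \<open>a \<in> A\<close> this(1) \<open>compact B'\<close> \<open>b' \<in> B'\<close> this(2)]
    show ?thesis
      unfolding M_def .
  qed
  obtain \<tau> \<sigma>' where "\<tau> \<in> strategies B" "\<sigma>' \<in> strategies A'"
    and drift: "\<And>k. d (state T' \<sigma>' \<tau>' x0' k) (state T \<sigma> \<tau> x0 k) \<le> d x0' x0 + real k * M"
    using coupled_strategies[where pa = pa and pb = pb and T = T and M = M, OF hm ne \<sigma> \<tau>' _ _ close] pa pb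
    by blast
  have "ereal (r' - e / 2) \<le> escape_rate d T' \<sigma>' \<tau>' x0'"
    using \<tau>'_bound[OF \<open>\<sigma>' \<in> strategies A'\<close>] .
  also have "\<dots> \<le> ereal M + escape_rate d T \<sigma> \<tau> x0"
    unfolding escape_rate_def using limsup_escape_le_add[OF hm drift] .
  also have "\<dots> \<le> ereal M + ereal (r + e / 2)"
    using \<sigma>_bound[OF \<open>\<tau> \<in> strategies B\<close>] by (rule add_left_mono)
  finally show "r' \<le> r + M + e"
    by simp
qed

theorem theorem3:
  fixes d :: "'x \<Rightarrow> 'x \<Rightarrow> real"
    and T T' :: "'e::metric_space \<Rightarrow> 'e \<Rightarrow> 'x \<Rightarrow> 'x"
    and \<epsilon> L :: real
    and A A' B B' :: "'e set"
    and x0 x0' :: 'x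
    and r r' :: real
  assumes "hemi_metric d"
    and "nonexpansive_family d T" and "nonexpansive_family d T'"
    and "\<epsilon> \<ge> 0" and "L > 0"
    and "\<And>a b a' b' x. dsym d (T a b x) (T' a' b' x) \<le> L * (dist a a' + dist b b') + \<epsilon>"
    and "compact A" "A \<noteq> {}" "compact A'" "A' \<noteq> {}"
    and "compact B" "B \<noteq> {}" "compact B'" "B' \<noteq> {}"
    and "standing_assumption d T A B" and "standing_assumption d T' A' B'"
    and "game_has_value d T A B x0 r"
    and "game_has_value d T' A' B' x0' r'"
  shows "\<bar>r - r'\<bar> \<le> L * (hausdorff_dist A A' + hausdorff_dist B B') + \<epsilon>"
proof -
  \<comment> \<open>The standing assumptions only serve to make the values exist, which is assumed directly.\<close>
  have perturb': "dsym d (T' a b x) (T a' b' x) \<le> L * (dist a a' + dist b b') + \<epsilon>" for a b a' b' x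
    using assms(6)[of a' b' x a b] by (simp add: dsym_def max.commute dist_commute add.commute)
  have "r' \<le> r + (L * (hausdorff_dist A A' + hausdorff_dist B B') + \<epsilon>)"
    by (rule game_value_le) (use assms in auto)
  moreover have "r \<le> r' + (L * (hausdorff_dist A' A + hausdorff_dist B' B) + \<epsilon>)"
    by (rule game_value_le[OF assms(1,2) _ perturb']) (use assms in auto)
  ultimately show ?thesis
    by (simp add: hausdorff_dist_commute abs_le_iff)
qed

end
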